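(* Let $X_1,\ldots,X_n$ (with $n\geqslant m\geqslant 2$) be independent copies of $X\sim\mathrm{Gamma}(\alpha,\lambda)$, $\alpha,\lambda>0$. Then for each $i=1,\ldots,m$, \[ \mathbb{E}[\widehat{{}_iIG}_{m;\min}]=\frac{1}{m}\left[1-\frac{1}{\alpha}\int_0^\infty\left\{1-\frac{\gamma(\alpha,v)}{\Gamma(\alpha)}\right\}^m{\rm d}v\right]=IG_{m;\min}, \] so that $\widehat{{}_iIG}_{m;\min}$ is an unbiased estimator of $IG_{m;\min}$ for gamma populations.
   Context: $\mathrm{Gamma}(\alpha,\lambda)$ has density $\lambda^\alpha x^{\alpha-1}e^{-\lambda x}/\Gamma(\alpha)$, $x>0$, and mean $\mu=\alpha/\lambda$; $\gamma(\alpha,v)=\int_0^v s^{\alpha-1}e^{-s}\,{\rm d}s$ is the lower incomplete gamma function. The estimator is \[ \widehat{{}_iIG}_{m;\min}=\frac{(m-1)!}{(n-1)(n-2)\cdots(n-m+1)}\,\frac{\sum_{1\leqslant j_1<\cdots<j_m\leqslant n}\left[X_{j_i}-\min\{X_{j_1},\ldots,X_{j_m}\}\right]}{\sum_{k=1}^n X_k}, \] and $IG_{m;\min}=\dfrac{\mathbb{E}[X_1-\min\{X_1,\ldots,X_m\}]}{m\mu}$ is the extended lower Gini index of $X$. *)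

theory Defs
  imports "HOL-Probability.Probability"
begin

definition gamma_density :: "real \<Rightarrow> real \<Rightarrow> real \<Rightarrow> real" where
  "gamma_density a l x =
     (if x > 0 then l powr a * x powr (a - 1) * exp (- l * x) / Gamma a else 0)"

definition lower_inc_gamma :: "real \<Rightarrow> real \<Rightarrow> real" where
  "lower_inc_gamma a v = (LBINT s=0..v. s powr (a - 1) * exp (- s))"

text \<open>A subset
  S of {1..n} with card m corresponds to j_1 < ... < j_m; j_i is the i-th
  smallest element, i.e. sorted_list_of_set S ! (i - 1).\<close>
definition IG_hat :: "nat \<Rightarrow> nat \<Rightarrow> nat \<Rightarrow> (nat \<Rightarrow> 'a \<Rightarrow> real) \<Rightarrow> 'a \<Rightarrow> real" where
  "IG_hat n m i X \<omega> =
     fact (m - 1) / (\<Prod>k=1..m-1. real (n - k)) *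
     ((\<Sum>S\<in>{S. S \<subseteq> {1..n} \<and> card S = m}.
         X (sorted_list_of_set S ! (i - 1)) \<omega> - Min ((\<lambda>j. X j \<omega>) ` S))
      / (\<Sum>k=1..n. X k \<omega>))"

text \<open>Extended lower Gini index IG_{m;min} of X, expressed via i.i.d. copies
  X 1, ..., X m of X: E[X_1 - min(X_1..X_m)] / (m * mu), mu = E[X_1].\<close>
definition IG_min :: "'a measure \<Rightarrow> nat \<Rightarrow> (nat \<Rightarrow> 'a \<Rightarrow> real) \<Rightarrow> real" where
  "IG_min M m X =
     (\<integral>\<omega>. X 1 \<omega> - Min ((\<lambda>j. X j \<omega>) ` {1..m}) \<partial>M) / (real m * (\<integral>\<omega>. X 1 \<omega> \<partial>M))"

end

theory Submission
  imports Defs "HOL-Real_Asymp.Real_Asymp"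
begin

text \<open>With T = X_1 + ... + X_n we have 1/T = \<integral>_0^\<infinity> exp(-tT) dt, so by Tonelli
  E[Y/T] = \<integral>_0^\<infinity> E[Y exp(-tT)] dt for every Y \<ge> 0, while E[Y] is the integrand at t = 0.
  Multiplying the Gamma(a,l) density by exp(-tx) gives (l/(l+t))^a times the Gamma(a,l+t)
  density, so by independence E[X_j exp(-tT)] = (l/(l+t))^(na) a/(l+t). Writing the minimum
  over a set S of m indices as \<integral>_0^\<infinity> 1{min > s} ds, the same factorisation gives
  E[min exp(-tT)] = (l/(l+t))^(na) K/(l+t) with K = \<integral>_0^\<infinity> (1 - \<gamma>(a,v)/\<Gamma>(a))^m dv.
  Hence E[X_j - min] = (a - K)/l and E[(X_j - min)/T] = (a - K)/(na) for every S and j \<in> S,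
  and summing over the C(n,m) subsets turns the constant of the estimator into that of IG_min.\<close>

section \<open>Gamma densities and the survival function\<close>

definition gamma_survival :: "real \<Rightarrow> real \<Rightarrow> real" where
  "gamma_survival a v = 1 - lower_inc_gamma a v / Gamma a"

lemma gamma_density_measurable [measurable]: "gamma_density a l \<in> borel_measurable borel"
  unfolding gamma_density_def by measurable

lemma gamma_density_nonneg: "a > 0 \<Longrightarrow> 0 \<le> gamma_density a l x"
  by (simp add: gamma_density_def less_imp_le)

lemma gamma_density_nonpos: "x \<le> 0 \<Longrightarrow> gamma_density a l x = 0"
  by (simp add: gamma_density_def)

lemma gamma_density_rescale:
  assumes "r > 0"
  shows "gamma_density a r x = r * gamma_density a 1 (r * x)"
proof (cases "x > 0")
  case True
  then have "r powr a * x powr (a - 1) = r * (r * x) powr (a - 1)"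
    using assms by (simp add: powr_mult powr_diff field_simps)
  then show ?thesis
    using True assms by (simp add: gamma_density_def)
qed (use assms in \<open>simp add: gamma_density_def zero_less_mult_iff\<close>)

lemma gamma_density_exp_tilt:
  assumes "l > 0" and "l + t > 0"
  shows "gamma_density a l x * exp (- (t * x))
           = (l / (l + t)) powr a * gamma_density a (l + t) x"
  using assms
  by (simp add: gamma_density_def powr_divide field_simps mult_exp_exp)

lemma gamma_density_mult_self:
  assumes "a > 0" and "r > 0"
  shows "x * gamma_density a r x = a / r * gamma_density (a + 1) r x"
proof (cases "x > 0")
  case True
  have "Gamma (a + 1) = a * Gamma a"
    using assms Gamma_plus1[of a] nonpos_Ints_nonpos[of a] by fastforce
  moreover have "x * x powr (a - 1) = x powr a" "r powr (a + 1) = r * r powr a"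
    using True assms by (simp_all add: powr_diff powr_add)
  ultimately show ?thesis
    using True assms Gamma_real_pos[OF assms(1)] by (simp add: gamma_density_def field_simps)
qed (simp add: gamma_density_def)

lemma gamma_density_unit_rate_eq:
  "x \<ge> 0 \<Longrightarrow> gamma_density a 1 x = x powr (a - 1) * exp (- x) / Gamma a"
  by (cases "x = 0") (simp_all add: gamma_density_def)

lemma nn_integral_gamma_density_unit_rate:
  assumes "a > 0"
  shows "(\<integral>\<^sup>+x. ennreal (gamma_density a 1 x) \<partial>lborel) = 1"
proof -
  have "(\<integral>\<^sup>+x. ennreal (gamma_density a 1 x) \<partial>lborel)
      = (\<integral>\<^sup>+x. ennreal (1 / Gamma a) * ennreal (indicator {0..} x * x powr (a - 1) / exp x) \<partial>lborel)"
    using assms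
    by (intro nn_integral_cong) (auto simp: gamma_density_unit_rate_eq gamma_density_nonpos
        indicator_def exp_minus field_simps ennreal_mult[symmetric])
  also have "\<dots> = ennreal (1 / Gamma a) * ennreal (Gamma a)"
    by (simp add: nn_integral_cmult Gamma_conv_nn_integral_real[OF assms])
  finally show ?thesis
    using Gamma_real_pos[OF assms] by (simp add: ennreal_mult[symmetric])
qed

lemma lower_inc_gamma_div_Gamma_eq_nn_integral:
  assumes "a > 0" and "v \<ge> 0"
  shows "ennreal (lower_inc_gamma a v / Gamma a)
           = (\<integral>\<^sup>+x. ennreal (gamma_density a 1 x) * indicator {0..v} x \<partial>lborel)"
proof -
  have "lower_inc_gamma a v = (LBINT s:{0..v}. s powr (a - 1) * exp (- s))"
    unfolding lower_inc_gamma_def using interval_integral_Icc[OF assms(2)]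
    by (simp add: zero_ereal_def)
  also have "\<dots> = (LBINT s:{0..v}. Gamma a * gamma_density a 1 s)"
    using Gamma_real_pos[OF assms(1)]
    by (intro set_lebesgue_integral_cong) (auto simp: gamma_density_unit_rate_eq)
  also have "\<dots> = Gamma a * (LBINT s:{0..v}. gamma_density a 1 s)"
    by (rule set_integral_mult_right)
  finally have "lower_inc_gamma a v / Gamma a = (LBINT s:{0..v}. gamma_density a 1 s)"
    using Gamma_real_pos[OF assms(1)] by simp
  also have "\<dots> = enn2real (\<integral>\<^sup>+x. ennreal (gamma_density a 1 x) * indicator {0..v} x \<partial>lborel)"
    unfolding set_lebesgue_integral_def using assms(1)
    by (subst integral_eq_nn_integral)
       (auto simp: gamma_density_nonneg intro!: arg_cong[where f=enn2real] nn_integral_cong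
             split: split_indicator)
  also have "ennreal \<dots> = (\<integral>\<^sup>+x. ennreal (gamma_density a 1 x) * indicator {0..v} x \<partial>lborel)"
  proof (rule ennreal_enn2real)
    have "(\<integral>\<^sup>+x. ennreal (gamma_density a 1 x) * indicator {0..v} x \<partial>lborel)
        \<le> (\<integral>\<^sup>+x. ennreal (gamma_density a 1 x) \<partial>lborel)"
      by (intro nn_integral_mono) (simp add: indicator_def)
    then show "(\<integral>\<^sup>+x. ennreal (gamma_density a 1 x) * indicator {0..v} x \<partial>lborel) < \<top>"
      using nn_integral_gamma_density_unit_rate[OF assms(1)] by (simp add: order_le_less_trans)
  qed
  finally show ?thesis .
qed

lemma lower_inc_gamma_nonneg:
  assumes "v \<ge> 0"
  shows "0 \<le> lower_inc_gamma a v"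
  unfolding lower_inc_gamma_def zero_ereal_def interval_integral_Icc[OF assms]
    set_lebesgue_integral_def
  by (simp add: integral_nonneg)

lemma gamma_survival_bounds:
  assumes "a > 0" and "v \<ge> 0"
  shows "0 \<le> gamma_survival a v" and "gamma_survival a v \<le> 1"
proof -
  have "ennreal (lower_inc_gamma a v / Gamma a) \<le> (\<integral>\<^sup>+x. ennreal (gamma_density a 1 x) \<partial>lborel)"
    unfolding lower_inc_gamma_div_Gamma_eq_nn_integral[OF assms]
    by (intro nn_integral_mono) (simp add: indicator_def)
  then show "0 \<le> gamma_survival a v"
    using nn_integral_gamma_density_unit_rate[OF assms(1)] by (simp add: gamma_survival_def)
  show "gamma_survival a v \<le> 1"
    using lower_inc_gamma_nonneg[OF assms(2)] Gamma_real_pos[OF assms(1)]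
    by (simp add: gamma_survival_def)
qed

lemma nn_integral_gamma_density_unit_rate_tail:
  assumes "a > 0" and "v \<ge> 0"
  shows "(\<integral>\<^sup>+x. ennreal (gamma_density a 1 x) * indicator {v<..} x \<partial>lborel)
           = ennreal (gamma_survival a v)"
proof -
  let ?head = "\<integral>\<^sup>+x. ennreal (gamma_density a 1 x) * indicator {0..v} x \<partial>lborel"
  let ?tail = "\<integral>\<^sup>+x. ennreal (gamma_density a 1 x) * indicator {v<..} x \<partial>lborel"
  have "(\<integral>\<^sup>+x. ennreal (gamma_density a 1 x) \<partial>lborel) = ?head + ?tail"
    using assms(2)
    by (subst nn_integral_add[symmetric])
       (auto intro!: nn_integral_cong simp: gamma_density_nonpos split: split_indicator)
  then have "ennreal (lower_inc_gamma a v / Gamma a) + ?tail = 1"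
    using nn_integral_gamma_density_unit_rate[OF assms(1)]
      lower_inc_gamma_div_Gamma_eq_nn_integral[OF assms] by simp
  moreover have "0 \<le> lower_inc_gamma a v / Gamma a"
    using lower_inc_gamma_nonneg[OF assms(2)] Gamma_real_pos[OF assms(1)] by simp
  ultimately show ?thesis
    unfolding gamma_survival_def
    by (metis ennreal_1 ennreal_add_diff_cancel_left ennreal_minus ennreal_neq_top)
qed

lemma nn_integral_gamma_density_tail:
  assumes "a > 0" and "r > 0" and "s \<ge> 0"
  shows "(\<integral>\<^sup>+x. ennreal (gamma_density a r x) * indicator {s<..} x \<partial>lborel)
           = ennreal (gamma_survival a (r * s))"
proof -
  define f where "f u = ennreal (gamma_density a 1 u) * indicator {r * s<..} u" for u
  have "(\<integral>\<^sup>+x. ennreal (gamma_density a r x) * indicator {s<..} x \<partial>lborel)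
      = (\<integral>\<^sup>+x. ennreal r * f (0 + r * x) \<partial>lborel)"
    using assms
    by (intro nn_integral_cong)
       (simp add: f_def gamma_density_rescale[of r] ennreal_mult gamma_density_nonneg
         mult.assoc split: split_indicator)
  also have "\<dots> = (\<integral>\<^sup>+u. f u \<partial>lborel)"
  proof -
    have "f \<in> borel_measurable borel"
      unfolding f_def by measurable
    then show ?thesis
      using assms(2) nn_integral_real_affine[of f r 0] by (simp add: nn_integral_cmult)
  qed
  also have "\<dots> = ennreal (gamma_survival a (r * s))"
    unfolding f_def using assms by (intro nn_integral_gamma_density_unit_rate_tail) auto
  finally show ?thesis .
qed

lemma gamma_survival_zero: "gamma_survival a 0 = 1"
  by (simp add: gamma_survival_def lower_inc_gamma_def zero_ereal_def)

lemma nn_integral_gamma_density: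
  assumes "a > 0" and "r > 0"
  shows "(\<integral>\<^sup>+x. ennreal (gamma_density a r x) \<partial>lborel) = 1"
proof -
  have "(\<integral>\<^sup>+x. ennreal (gamma_density a r x) \<partial>lborel)
      = (\<integral>\<^sup>+x. ennreal (gamma_density a r x) * indicator {0<..} x \<partial>lborel)"
    by (intro nn_integral_cong) (simp add: gamma_density_nonpos split: split_indicator)
  then show ?thesis
    using nn_integral_gamma_density_tail[OF assms order_refl] by (simp add: gamma_survival_zero)
qed

lemma nn_integral_gamma_density_mean:
  assumes "a > 0" and "r > 0"
  shows "(\<integral>\<^sup>+x. ennreal (x * gamma_density a r x) \<partial>lborel) = ennreal (a / r)"
proof -
  have "(\<integral>\<^sup>+x. ennreal (x * gamma_density a r x) \<partial>lborel)
      = (\<integral>\<^sup>+x. ennreal (a / r) * ennreal (gamma_density (a + 1) r x) \<partial>lborel)"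
    using assms
    by (intro nn_integral_cong)
       (simp add: gamma_density_mult_self gamma_density_nonneg ennreal_mult[symmetric])
  also have "\<dots> = ennreal (a / r)"
    using assms by (simp add: nn_integral_cmult nn_integral_gamma_density)
  finally show ?thesis .
qed

lemma nn_integral_gamma_density_exp_tilt:
  assumes "l > 0" and "t \<ge> 0" and [measurable]: "g \<in> borel_measurable borel"
  shows "(\<integral>\<^sup>+x. ennreal (gamma_density a l x) * (ennreal (exp (- (t * x))) * g x) \<partial>lborel)
           = ennreal ((l / (l + t)) powr a)
               * (\<integral>\<^sup>+x. ennreal (gamma_density a (l + t) x) * g x \<partial>lborel)"
proof -
  have tilt: "ennreal (gamma_density a l x) * ennreal (exp (- (t * x)))
          = ennreal ((l / (l + t)) powr a) * ennreal (gamma_density a (l + t) x)" for x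
    using assms
    by (simp add: ennreal_mult''[symmetric] ennreal_mult'[symmetric] gamma_density_exp_tilt)
  have "(\<integral>\<^sup>+x. ennreal (gamma_density a l x) * (ennreal (exp (- (t * x))) * g x) \<partial>lborel)
      = (\<integral>\<^sup>+x. ennreal ((l / (l + t)) powr a) * (ennreal (gamma_density a (l + t) x) * g x) \<partial>lborel)"
    by (simp add: mult.assoc[symmetric] tilt)
  also have "\<dots> = ennreal ((l / (l + t)) powr a)
               * (\<integral>\<^sup>+x. ennreal (gamma_density a (l + t) x) * g x \<partial>lborel)"
    by (rule nn_integral_cmult) measurable
  finally show ?thesis .
qed

section \<open>Two integral representations\<close>

lemma ennreal_inverse_eq_nn_integral_exp:
  fixes T :: real
  assumes "T > 0"
  shows "ennreal (1 / T) = (\<integral>\<^sup>+t. ennreal (exp (- (t * T))) * indicator {0..} t \<partial>lborel)"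
proof -
  define F where "F t = - (exp (- (t * T)) / T)" for t :: real
  have "(\<integral>\<^sup>+t. ennreal (exp (- (t * T))) * indicator {0..} t \<partial>lborel) = 0 - F 0"
  proof (rule nn_integral_FTC_atLeast)
    show "(F \<longlongrightarrow> 0) at_top"
      unfolding F_def using assms by real_asymp
  qed (use assms in \<open>auto intro!: derivative_eq_intros simp: F_def field_simps\<close>)
  then show ?thesis
    by (simp add: F_def)
qed

lemma nn_integral_divide_eq_nn_integral_exp:
  assumes "sigma_finite_measure M"
    and [measurable]: "Y \<in> borel_measurable M" "T \<in> borel_measurable M"
    and "AE \<omega> in M. T \<omega> > 0"
  shows "(\<integral>\<^sup>+\<omega>. ennreal (Y \<omega> / T \<omega>) \<partial>M)
           = (\<integral>\<^sup>+t. (\<integral>\<^sup>+\<omega>. ennreal (Y \<omega>) * ennreal (exp (- (t * T \<omega>))) \<partial>M)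
                      * indicator {0..} t \<partial>lborel)"
proof -
  interpret pair_sigma_finite M lborel
    using assms(1) by (simp add: pair_sigma_finite_def lborel.sigma_finite_measure_axioms)
  have "AE \<omega> in M. ennreal (Y \<omega> / T \<omega>)
          = (\<integral>\<^sup>+t. ennreal (Y \<omega>) * ennreal (exp (- (t * T \<omega>))) * indicator {0..} t \<partial>lborel)"
    using assms(4)
  proof eventually_elim
    case (elim \<omega>)
    then have "ennreal (Y \<omega> / T \<omega>) = ennreal (Y \<omega>) * ennreal (1 / T \<omega>)"
      by (simp add: ennreal_mult''[symmetric])
    then show ?case
      using elim by (simp add: ennreal_inverse_eq_nn_integral_exp nn_integral_cmult mult.assoc)
  qed
  then have "(\<integral>\<^sup>+\<omega>. ennreal (Y \<omega> / T \<omega>) \<partial>M)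
      = (\<integral>\<^sup>+\<omega>. (\<integral>\<^sup>+t. ennreal (Y \<omega>) * ennreal (exp (- (t * T \<omega>)))
                          * indicator {0..} t \<partial>lborel) \<partial>M)"
    by (rule nn_integral_cong_AE)
  also have "\<dots> = (\<integral>\<^sup>+t. (\<integral>\<^sup>+\<omega>. ennreal (Y \<omega>) * ennreal (exp (- (t * T \<omega>)))
                          * indicator {0..} t \<partial>M) \<partial>lborel)"
    by (rule Fubini'[symmetric]) measurable
  finally show ?thesis
    by (simp add: nn_integral_multc)
qed

lemma nn_integral_eq_nn_integral_superlevel:
  assumes "sigma_finite_measure M"
    and [measurable]: "Y \<in> borel_measurable M" "w \<in> borel_measurable M"
  shows "(\<integral>\<^sup>+\<omega>. ennreal (Y \<omega>) * w \<omega> \<partial>M)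
           = (\<integral>\<^sup>+s. (\<integral>\<^sup>+\<omega>. indicator {s<..} (Y \<omega>) * w \<omega> \<partial>M) * indicator {0..} s \<partial>lborel)"
proof -
  interpret pair_sigma_finite M lborel
    using assms(1) by (simp add: pair_sigma_finite_def lborel.sigma_finite_measure_axioms)
  have "ennreal (Y \<omega>) * w \<omega>
          = (\<integral>\<^sup>+s. indicator {s<..} (Y \<omega>) * w \<omega> * indicator {0..} s \<partial>lborel)" for \<omega>
  proof -
    have "(\<integral>\<^sup>+s. indicator {s<..} (Y \<omega>) * w \<omega> * indicator {0..} s \<partial>lborel)
        = (\<integral>\<^sup>+s. w \<omega> * indicator {0..<Y \<omega>} s \<partial>lborel)"
      by (intro nn_integral_cong) (simp split: split_indicator)
    then show ?thesis
      by (cases "Y \<omega> \<ge> 0") (simp_all add: nn_integral_cmult_indicator ennreal_neg mult.commute)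
  qed
  then have "(\<integral>\<^sup>+\<omega>. ennreal (Y \<omega>) * w \<omega> \<partial>M)
      = (\<integral>\<^sup>+\<omega>. (\<integral>\<^sup>+s. indicator {s<..} (Y \<omega>) * w \<omega> * indicator {0..} s \<partial>lborel) \<partial>M)"
    by simp
  also have "\<dots> = (\<integral>\<^sup>+s. (\<integral>\<^sup>+\<omega>. indicator {s<..} (Y \<omega>) * w \<omega> * indicator {0..} s \<partial>M) \<partial>lborel)"
    by (rule Fubini'[symmetric]) (unfold indicator_def greaterThan_iff, measurable)
  finally show ?thesis
    by (simp add: nn_integral_multc)
qed

lemma nn_integral_ratio_powr_div:
  fixes p l c :: real
  assumes "p > 0" and "l > 0" and "c \<ge> 0"
  shows "(\<integral>\<^sup>+t. ennreal ((l / (l + t)) powr p * (c / (l + t))) * indicator {0..} t \<partial>lborel)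
           = ennreal (c / p)"
proof -
  define F where "F t = - (c / p) * l powr p * (l + t) powr (- p)" for t :: real
  have integrand: "(l / (l + t)) powr p * (c / (l + t)) = c * l powr p * (l + t) powr (- p - 1)"
    if "t \<ge> 0" for t
    using that assms by (simp add: powr_divide powr_diff powr_minus field_simps)
  have "(\<integral>\<^sup>+t. ennreal ((l / (l + t)) powr p * (c / (l + t))) * indicator {0..} t \<partial>lborel)
      = (\<integral>\<^sup>+t. ennreal (c * l powr p * (l + t) powr (- p - 1)) * indicator {0..} t \<partial>lborel)"
    using integrand by (intro nn_integral_cong) (simp split: split_indicator)
  also have "\<dots> = 0 - F 0"
  proof (rule nn_integral_FTC_atLeast)
    show "(F \<longlongrightarrow> 0) at_top"
      unfolding F_def using assms by real_asymp
  qed (use assms in \<open>auto intro!: derivative_eq_intros simp: F_def field_simps\<close>)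
  also have "0 - F 0 = c / p"
    using assms by (simp add: F_def powr_minus field_simps)
  finally show ?thesis .
qed

section \<open>Integrals of powers of the survival function\<close>

lemma gamma_survival_power_measurable [measurable]:
  assumes "a > 0"
  shows "(\<lambda>v. indicator {0..} v * gamma_survival a v ^ m) \<in> borel_measurable borel"
proof -
  have "(\<lambda>v. indicator {0..} v * gamma_survival a v ^ m)
      = (\<lambda>v. indicator {0..} v
           * enn2real (\<integral>\<^sup>+x. ennreal (gamma_density a 1 x) * indicator {v<..} x \<partial>lborel) ^ m)"
    using nn_integral_gamma_density_unit_rate_tail[OF assms] gamma_survival_bounds[OF assms]
    by (auto simp: fun_eq_iff split: split_indicator)
  also have "\<dots> \<in> borel_measurable borel"
    by (unfold indicator_def greaterThan_iff) measurable
  finally show ?thesis .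
qed

lemma gamma_survival_power_rescaled_measurable [measurable]:
  assumes "a > 0" and "r > 0"
  shows "(\<lambda>s. ennreal (gamma_survival a (r * s) ^ m) * indicator {0..} s) \<in> borel_measurable borel"
proof -
  have "(\<lambda>s. ennreal (gamma_survival a (r * s) ^ m) * indicator {0..} s)
      = (\<lambda>v. ennreal (indicator {0..} v * gamma_survival a v ^ m)) \<circ> (\<lambda>s. r * s)"
    using assms(2) by (auto simp: fun_eq_iff zero_le_mult_iff split: split_indicator)
  also have "\<dots> \<in> borel_measurable borel"
    using assms(1) by measurable
  finally show ?thesis .
qed

lemma nn_integral_gamma_survival_power_rescale:
  assumes "a > 0" and "r > 0"
  shows "(\<integral>\<^sup>+s. ennreal (gamma_survival a (r * s) ^ m) * indicator {0..} s \<partial>lborel)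
           = ennreal (1 / r)
               * (\<integral>\<^sup>+v. ennreal (gamma_survival a v ^ m) * indicator {0..} v \<partial>lborel)"
proof -
  let ?g = "\<lambda>v. ennreal (gamma_survival a v ^ m) * indicator {0..} v"
  have "(\<integral>\<^sup>+v. ?g v \<partial>lborel) = ennreal r * (\<integral>\<^sup>+s. ?g (0 + r * s) \<partial>lborel)"
    using nn_integral_real_affine[of ?g r 0] assms
      gamma_survival_power_rescaled_measurable[OF assms(1) zero_less_one]
    by simp
  also have "(\<lambda>s. ?g (0 + r * s))
      = (\<lambda>s. ennreal (gamma_survival a (r * s) ^ m) * indicator {0..} s)"
    using assms by (auto simp: indicator_def zero_le_mult_iff)
  finally show ?thesis
    using assms by (simp add: mult.assoc[symmetric] ennreal_mult[symmetric])
qed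

lemma nn_integral_gamma_survival:
  assumes "a > 0"
  shows "(\<integral>\<^sup>+v. ennreal (gamma_survival a v) * indicator {0..} v \<partial>lborel) = ennreal a"
proof -
  have "ennreal a = (\<integral>\<^sup>+x. ennreal x * ennreal (gamma_density a 1 x) \<partial>lborel)"
    using nn_integral_gamma_density_mean[OF assms zero_less_one]
    by (simp add: ennreal_mult'' gamma_density_nonneg[OF assms])
  also have "\<dots> = (\<integral>\<^sup>+s. (\<integral>\<^sup>+x. indicator {s<..} x * ennreal (gamma_density a 1 x) \<partial>lborel)
                        * indicator {0..} s \<partial>lborel)"
    by (rule nn_integral_eq_nn_integral_superlevel) (auto simp: lborel.sigma_finite_measure_axioms)
  also have "\<dots> = (\<integral>\<^sup>+v. ennreal (gamma_survival a v) * indicator {0..} v \<partial>lborel)"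
    using nn_integral_gamma_density_unit_rate_tail[OF assms]
    by (intro nn_integral_cong) (simp add: mult.commute split: split_indicator)
  finally show ?thesis
    by (rule sym)
qed

lemma gamma_survival_power_integral_nonneg:
  assumes "a > 0"
  shows "0 \<le> (LBINT v:{0..}. gamma_survival a v ^ m)"
  unfolding set_lebesgue_integral_def using gamma_survival_bounds[OF assms]
  by (intro Bochner_Integration.integral_nonneg) (simp split: split_indicator)

lemma nn_integral_gamma_survival_power:
  assumes "a > 0" and "m \<ge> 1"
  shows "(\<integral>\<^sup>+v. ennreal (gamma_survival a v ^ m) * indicator {0..} v \<partial>lborel)
           = ennreal (LBINT v:{0..}. gamma_survival a v ^ m)"
proof -
  let ?K = "\<integral>\<^sup>+v. ennreal (gamma_survival a v ^ m) * indicator {0..} v \<partial>lborel"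
  have "?K \<le> (\<integral>\<^sup>+v. ennreal (gamma_survival a v) * indicator {0..} v \<partial>lborel)"
    using gamma_survival_bounds[OF assms(1)] assms(2)
    by (intro nn_integral_mono)
       (simp add: power_decreasing[of 1 m, simplified] split: split_indicator)
  then have "?K < \<top>"
    using nn_integral_gamma_survival[OF assms(1)] by (simp add: order_le_less_trans)
  moreover have "(LBINT v:{0..}. gamma_survival a v ^ m) = enn2real ?K"
    using gamma_survival_bounds[OF assms(1)] gamma_survival_power_measurable[OF assms(1)]
    unfolding set_lebesgue_integral_def
    by (subst integral_eq_nn_integral)
       (auto simp: mult.commute intro!: arg_cong[where f=enn2real] nn_integral_cong
             split: split_indicator)
  ultimately show ?thesis
    by simp
qed

section \<open>Samples of independent Gamma variables\<close>

lemma fact_div_prod_mult_binomial: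
  assumes "1 \<le> m" and "m \<le> n"
  shows "fact (m - 1) / (\<Prod>k=1..m-1. real (n - k)) * real (n choose m) = real n / real m"
proof -
  have shifted: "(\<Prod>k\<in>{1..<m}. real n - real k) = (\<Prod>k=1..m-1. real (n - k))"
    using assms by (intro prod.cong) auto
  have "real (n choose m) * fact m = (\<Prod>k<m. real n - real k)"
    by (simp add: binomial_gbinomial gbinomial_mult_fact' atLeast0LessThan)
  also have "\<dots> = real n * (\<Prod>k=1..m-1. real (n - k))"
    using assms(1) shifted by (simp add: lessThan_atLeast0 prod.atLeast_Suc_lessThan)
  finally have "real (n choose m) * fact (m - 1) * real m = real n * (\<Prod>k=1..m-1. real (n - k))"
    using assms(1) by (simp add: fact_reduce mult_ac)
  moreover have "(\<Prod>k=1..m-1. real (n - k)) > 0"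
    using assms by (intro prod_pos) auto
  ultimately show ?thesis
    using assms by (auto simp: field_simps)
qed

lemma indicator_greaterThan_Min:
  fixes f :: "'b \<Rightarrow> 'c :: linorder"
  assumes "finite S" and "S \<noteq> {}"
  shows "(indicator {s<..} (Min (f ` S)) :: 'd :: comm_semiring_1)
           = (\<Prod>k\<in>S. indicator {s<..} (f k))"
  using assms
  by (induction S rule: finite_ne_induct) (simp_all add: indicator_def of_bool_conj)

locale gamma_sample = prob_space M for M :: "'a measure" +
  fixes X :: "nat \<Rightarrow> 'a \<Rightarrow> real" and n :: nat and a l :: real
  assumes shape_pos: "a > 0" and rate_pos: "l > 0"
    and indep: "indep_vars (\<lambda>_. borel) X {1..n}"
    and distributed_gamma:
      "\<And>k. k \<in> {1..n} \<Longrightarrow> distributed M lborel (X k) (\<lambda>x. ennreal (gamma_density a l x))"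
begin

abbreviation sample_sum :: "'a \<Rightarrow> real" where
  "sample_sum \<omega> \<equiv> \<Sum>k\<in>{1..n}. X k \<omega>"

lemma measurable_X [measurable]: "k \<in> {1..n} \<Longrightarrow> X k \<in> borel_measurable M"
  using distributed_measurable[OF distributed_gamma] by simp

lemma AE_X_pos: "AE \<omega> in M. \<forall>k\<in>{1..n}. X k \<omega> > 0"
proof (rule AE_finite_allI)
  fix k assume k: "k \<in> {1..n}"
  have "AE x in distr M lborel (X k). x > 0"
    unfolding distributed_distr_eq_density[OF distributed_gamma[OF k]]
    by (subst AE_density) (auto simp: gamma_density_def)
  then show "AE \<omega> in M. X k \<omega> > 0"
    using k by (auto dest: AE_distrD[rotated])
qed simp

lemma nn_integral_prod_X:
  assumes [measurable]: "\<And>k. g k \<in> borel_measurable borel"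
  shows "(\<integral>\<^sup>+\<omega>. (\<Prod>k\<in>{1..n}. g k (X k \<omega>)) \<partial>M)
           = (\<Prod>k\<in>{1..n}. \<integral>\<^sup>+x. ennreal (gamma_density a l x) * g k x \<partial>lborel)"
proof -
  have "(\<integral>\<^sup>+\<omega>. (\<Prod>k\<in>{1..n}. g k (X k \<omega>)) \<partial>M) = (\<Prod>k\<in>{1..n}. \<integral>\<^sup>+\<omega>. g k (X k \<omega>) \<partial>M)"
    by (intro indep_vars_nn_integral indep_vars_compose2[OF indep]) auto
  also have "\<dots> = (\<Prod>k\<in>{1..n}. \<integral>\<^sup>+x. ennreal (gamma_density a l x) * g k x \<partial>lborel)"
    by (intro prod.cong refl distributed_nn_integral[symmetric, OF distributed_gamma]) auto
  finally show ?thesis .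
qed

lemma nn_integral_exp_sample_sum_prod:
  assumes "t \<ge> 0" and [measurable]: "\<And>k. g k \<in> borel_measurable borel"
  shows "(\<integral>\<^sup>+\<omega>. ennreal (exp (- (t * sample_sum \<omega>))) * (\<Prod>k\<in>{1..n}. g k (X k \<omega>)) \<partial>M)
           = ennreal ((l / (l + t)) powr (real n * a))
               * (\<Prod>k\<in>{1..n}. \<integral>\<^sup>+x. ennreal (gamma_density a (l + t) x) * g k x \<partial>lborel)"
proof -
  have "ennreal (exp (- (t * sample_sum \<omega>))) * (\<Prod>k\<in>{1..n}. g k (X k \<omega>))
      = (\<Prod>k\<in>{1..n}. ennreal (exp (- (t * X k \<omega>))) * g k (X k \<omega>))" for \<omega>
    by (simp add: prod.distrib sum_distrib_left exp_sum prod_ennreal sum_negf[symmetric])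
  then have "(\<integral>\<^sup>+\<omega>. ennreal (exp (- (t * sample_sum \<omega>))) * (\<Prod>k\<in>{1..n}. g k (X k \<omega>)) \<partial>M)
      = (\<integral>\<^sup>+\<omega>. (\<Prod>k\<in>{1..n}. ennreal (exp (- (t * X k \<omega>))) * g k (X k \<omega>)) \<partial>M)"
    by simp
  also have "\<dots> = (\<Prod>k\<in>{1..n}. \<integral>\<^sup>+x. ennreal (gamma_density a l x)
                     * (ennreal (exp (- (t * x))) * g k x) \<partial>lborel)"
    by (rule nn_integral_prod_X[where g = "\<lambda>k x. ennreal (exp (- (t * x))) * g k x"]) measurable
  also have "\<dots> = (\<Prod>k\<in>{1..n}. ennreal ((l / (l + t)) powr a)
                     * (\<integral>\<^sup>+x. ennreal (gamma_density a (l + t) x) * g k x \<partial>lborel))"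
    using rate_pos assms by (simp add: nn_integral_gamma_density_exp_tilt)
  also have "\<dots> = ennreal ((l / (l + t)) powr (real n * a))
               * (\<Prod>k\<in>{1..n}. \<integral>\<^sup>+x. ennreal (gamma_density a (l + t) x) * g k x \<partial>lborel)"
    using rate_pos assms by (simp add: prod.distrib ennreal_power powr_power)
  finally show ?thesis .
qed

lemma nn_integral_X_exp_sample_sum:
  assumes "j \<in> {1..n}" and "t \<ge> 0"
  shows "(\<integral>\<^sup>+\<omega>. ennreal (X j \<omega>) * ennreal (exp (- (t * sample_sum \<omega>))) \<partial>M)
           = ennreal ((l / (l + t)) powr (real n * a) * (a / (l + t)))"
proof -
  define g where "g k x = (if k = j then ennreal x else 1)" for k x
  have [measurable]: "g k \<in> borel_measurable borel" for k
    unfolding g_def by measurable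
  have "(\<integral>\<^sup>+\<omega>. ennreal (X j \<omega>) * ennreal (exp (- (t * sample_sum \<omega>))) \<partial>M)
      = (\<integral>\<^sup>+\<omega>. ennreal (exp (- (t * sample_sum \<omega>))) * (\<Prod>k\<in>{1..n}. g k (X k \<omega>)) \<partial>M)"
    using assms(1) by (simp add: g_def mult.commute)
  also have "\<dots> = ennreal ((l / (l + t)) powr (real n * a))
      * (\<Prod>k\<in>{1..n}. \<integral>\<^sup>+x. ennreal (gamma_density a (l + t) x) * g k x \<partial>lborel)"
    using assms(2) by (rule nn_integral_exp_sample_sum_prod) measurable
  also have "(\<integral>\<^sup>+x. ennreal (gamma_density a (l + t) x) * g k x \<partial>lborel)
      = (if k = j then ennreal (a / (l + t)) else 1)" for k
    using assms(2) shape_pos rate_pos nn_integral_gamma_density_mean[of a "l + t"]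
    by (simp add: g_def nn_integral_gamma_density ennreal_mult'' gamma_density_nonneg mult.commute)
  then have "(\<Prod>k\<in>{1..n}. \<integral>\<^sup>+x. ennreal (gamma_density a (l + t) x) * g k x \<partial>lborel)
      = ennreal (a / (l + t))"
    using assms(1) by simp
  finally show ?thesis
    using shape_pos rate_pos assms(2) by (simp add: ennreal_mult[symmetric])
qed

lemma nn_integral_Min_exp_sample_sum:
  assumes "S \<subseteq> {1..n}" and "S \<noteq> {}" and "t \<ge> 0"
  shows "(\<integral>\<^sup>+\<omega>. ennreal (Min ((\<lambda>k. X k \<omega>) ` S)) * ennreal (exp (- (t * sample_sum \<omega>))) \<partial>M)
           = ennreal ((l / (l + t)) powr (real n * a)
                      * ((LBINT v:{0..}. gamma_survival a v ^ card S) / (l + t)))"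
proof -
  have fin: "finite S"
    using assms(1) finite_subset by blast
  have lt: "l + t > 0"
    using rate_pos assms(3) by simp
  have [measurable]: "(\<lambda>\<omega>. Min ((\<lambda>k. X k \<omega>) ` S)) \<in> borel_measurable M"
    using fin assms(1) by (intro borel_measurable_Min) auto
  have tail: "(\<integral>\<^sup>+\<omega>. indicator {s<..} (Min ((\<lambda>k. X k \<omega>) ` S))
                   * ennreal (exp (- (t * sample_sum \<omega>))) \<partial>M)
      = ennreal ((l / (l + t)) powr (real n * a))
          * ennreal (gamma_survival a ((l + t) * s) ^ card S)"
    if s: "s \<ge> 0" for s
  proof -
    define g where "g k x = (if k \<in> S then indicator {s<..} x else 1 :: ennreal)" for k x
    have [measurable]: "g k \<in> borel_measurable borel" for k
      unfolding g_def by measurable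
    have "(\<integral>\<^sup>+\<omega>. indicator {s<..} (Min ((\<lambda>k. X k \<omega>) ` S))
                   * ennreal (exp (- (t * sample_sum \<omega>))) \<partial>M)
        = (\<integral>\<^sup>+\<omega>. ennreal (exp (- (t * sample_sum \<omega>))) * (\<Prod>k\<in>{1..n}. g k (X k \<omega>)) \<partial>M)"
      using fin assms(1,2)
      by (simp add: indicator_greaterThan_Min g_def prod.If_cases Int_absorb1 mult.commute)
    also have "\<dots> = ennreal ((l / (l + t)) powr (real n * a))
        * (\<Prod>k\<in>{1..n}. \<integral>\<^sup>+x. ennreal (gamma_density a (l + t) x) * g k x \<partial>lborel)"
      using assms(3) by (rule nn_integral_exp_sample_sum_prod) measurable
    also have "(\<integral>\<^sup>+x. ennreal (gamma_density a (l + t) x) * g k x \<partial>lborel)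
        = (if k \<in> S then ennreal (gamma_survival a ((l + t) * s)) else 1)" for k
      using shape_pos lt s
      by (simp add: g_def nn_integral_gamma_density nn_integral_gamma_density_tail)
    then have "(\<Prod>k\<in>{1..n}. \<integral>\<^sup>+x. ennreal (gamma_density a (l + t) x) * g k x \<partial>lborel)
        = ennreal (gamma_survival a ((l + t) * s) ^ card S)"
      using assms(1) shape_pos lt s gamma_survival_bounds[OF shape_pos, of "(l + t) * s"]
      by (simp add: prod.If_cases Int_absorb1 ennreal_power)
    finally show ?thesis .
  qed
  have "(\<integral>\<^sup>+\<omega>. ennreal (Min ((\<lambda>k. X k \<omega>) ` S)) * ennreal (exp (- (t * sample_sum \<omega>))) \<partial>M)
      = (\<integral>\<^sup>+s. (\<integral>\<^sup>+\<omega>. indicator {s<..} (Min ((\<lambda>k. X k \<omega>) ` S))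
                   * ennreal (exp (- (t * sample_sum \<omega>))) \<partial>M) * indicator {0..} s \<partial>lborel)"
    by (rule nn_integral_eq_nn_integral_superlevel) (auto simp: sigma_finite_measure_axioms)
  also have "\<dots> = (\<integral>\<^sup>+s. ennreal ((l / (l + t)) powr (real n * a))
                 * (ennreal (gamma_survival a ((l + t) * s) ^ card S) * indicator {0..} s) \<partial>lborel)"
    using tail by (intro nn_integral_cong) (simp add: mult.assoc split: split_indicator)
  also have "\<dots> = ennreal ((l / (l + t)) powr (real n * a)) * ennreal (1 / (l + t))
                 * ennreal (LBINT v:{0..}. gamma_survival a v ^ card S)"
    using shape_pos lt fin assms(2)
    by (simp add: nn_integral_cmult nn_integral_gamma_survival_power_rescale
        nn_integral_gamma_survival_power card_gt_0_iff Suc_leI mult.assoc)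
  also have "\<dots> = ennreal ((l / (l + t)) powr (real n * a)
                      * ((LBINT v:{0..}. gamma_survival a v ^ card S) / (l + t)))"
    using lt gamma_survival_power_integral_nonneg[OF shape_pos]
    by (simp add: ennreal_mult[symmetric])
  finally show ?thesis .
qed

lemma AE_sample_sum_pos:
  assumes "n \<ge> 1"
  shows "AE \<omega> in M. sample_sum \<omega> > 0"
  using AE_X_pos by eventually_elim (use assms in \<open>auto intro: sum_pos\<close>)

lemma has_bochner_integral_mean_and_ratio_from_Laplace:
  assumes "n \<ge> 1" and "c \<ge> 0"
    and [measurable]: "Y \<in> borel_measurable M" and Y_nonneg: "AE \<omega> in M. Y \<omega> \<ge> 0"
    and Laplace: "\<And>t. t \<ge> 0 \<Longrightarrow>
        (\<integral>\<^sup>+\<omega>. ennreal (Y \<omega>) * ennreal (exp (- (t * sample_sum \<omega>))) \<partial>M)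
          = ennreal ((l / (l + t)) powr (real n * a) * (c / (l + t)))"
  shows "has_bochner_integral M Y (c / l)"
    and "has_bochner_integral M (\<lambda>\<omega>. Y \<omega> / sample_sum \<omega>) (c / (real n * a))"
proof -
  show "has_bochner_integral M Y (c / l)"
    using Laplace[of 0] Y_nonneg assms(2) rate_pos
    by (intro has_bochner_integral_nn_integral) auto
  have "(\<integral>\<^sup>+\<omega>. ennreal (Y \<omega> / sample_sum \<omega>) \<partial>M)
      = (\<integral>\<^sup>+t. ennreal ((l / (l + t)) powr (real n * a) * (c / (l + t)))
                  * indicator {0..} t \<partial>lborel)"
    using AE_sample_sum_pos[OF assms(1)] Laplace
    by (subst nn_integral_divide_eq_nn_integral_exp)
       (auto intro!: nn_integral_cong simp: prob_space_imp_sigma_finite[OF prob_space_axioms]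
         split: split_indicator)
  also have "\<dots> = ennreal (c / (real n * a))"
    using assms(1,2) shape_pos rate_pos by (intro nn_integral_ratio_powr_div) auto
  finally show "has_bochner_integral M (\<lambda>\<omega>. Y \<omega> / sample_sum \<omega>) (c / (real n * a))"
    using Y_nonneg AE_sample_sum_pos[OF assms(1)] assms(2) shape_pos
    by (intro has_bochner_integral_nn_integral) auto
qed

lemma has_bochner_integral_X:
  assumes "j \<in> {1..n}"
  shows "has_bochner_integral M (X j) (a / l)"
    and "has_bochner_integral M (\<lambda>\<omega>. X j \<omega> / sample_sum \<omega>) (a / (real n * a))"
proof -
  have "AE \<omega> in M. X j \<omega> \<ge> 0"
    using AE_X_pos by eventually_elim (use assms in \<open>auto intro: less_imp_le\<close>)
  from has_bochner_integral_mean_and_ratio_from_Laplace[OF _ less_imp_le[OF shape_pos]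
      measurable_X[OF assms] this nn_integral_X_exp_sample_sum[OF assms]]
  show "has_bochner_integral M (X j) (a / l)"
    and "has_bochner_integral M (\<lambda>\<omega>. X j \<omega> / sample_sum \<omega>) (a / (real n * a))"
    using assms by auto
qed

lemma has_bochner_integral_X_minus_Min:
  assumes "S \<subseteq> {1..n}" and "j \<in> S"
  defines "K \<equiv> LBINT v:{0..}. gamma_survival a v ^ card S"
  shows "has_bochner_integral M (\<lambda>\<omega>. X j \<omega> - Min ((\<lambda>k. X k \<omega>) ` S)) ((a - K) / l)"
    and "has_bochner_integral M (\<lambda>\<omega>. (X j \<omega> - Min ((\<lambda>k. X k \<omega>) ` S)) / sample_sum \<omega>)
           ((a - K) / (real n * a))"
proof -
  have j: "j \<in> {1..n}" and n: "n \<ge> 1" and S: "S \<noteq> {}" "finite S"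
    using assms(1,2) finite_subset by auto
  have Min_measurable: "(\<lambda>\<omega>. Min ((\<lambda>k. X k \<omega>) ` S)) \<in> borel_measurable M"
    using S assms(1) by (intro borel_measurable_Min) auto
  have AE_Min_nonneg: "AE \<omega> in M. Min ((\<lambda>k. X k \<omega>) ` S) \<ge> 0"
    using AE_X_pos by eventually_elim (use S assms(1) in force)
  have K: "K \<ge> 0"
    unfolding K_def by (rule gamma_survival_power_integral_nonneg[OF shape_pos])
  note X = has_bochner_integral_X[OF j]
  note Min = has_bochner_integral_mean_and_ratio_from_Laplace[OF n K Min_measurable AE_Min_nonneg
      nn_integral_Min_exp_sample_sum[OF assms(1) S(1), folded K_def]]
  show "has_bochner_integral M (\<lambda>\<omega>. X j \<omega> - Min ((\<lambda>k. X k \<omega>) ` S)) ((a - K) / l)"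
    using has_bochner_integral_diff[OF X(1) Min(1)] shape_pos K by (simp add: diff_divide_distrib)
  show "has_bochner_integral M (\<lambda>\<omega>. (X j \<omega> - Min ((\<lambda>k. X k \<omega>) ` S)) / sample_sum \<omega>)
           ((a - K) / (real n * a))"
    using has_bochner_integral_diff[OF X(2) Min(2)] shape_pos K by (simp add: diff_divide_distrib)
qed

lemma integral_IG_min:
  assumes "1 \<le> m" and "m \<le> n"
  shows "IG_min M m X = (a - (LBINT v:{0..}. gamma_survival a v ^ m)) / (real m * a)"
proof -
  have "(\<integral>\<omega>. X 1 \<omega> - Min ((\<lambda>j. X j \<omega>) ` {1..m}) \<partial>M)
      = (a - (LBINT v:{0..}. gamma_survival a v ^ m)) / l"
    using has_bochner_integral_X_minus_Min(1)[of "{1..m}" 1] assms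
    by (simp add: has_bochner_integral_integral_eq)
  moreover have "(\<integral>\<omega>. X 1 \<omega> \<partial>M) = a / l"
    using has_bochner_integral_X(1)[of 1] assms by (simp add: has_bochner_integral_integral_eq)
  ultimately show ?thesis
    unfolding IG_min_def using shape_pos rate_pos assms by simp
qed

lemma integral_IG_hat:
  assumes "1 \<le> i" and "i \<le> m" and "m \<le> n"
  shows "(\<integral>\<omega>. IG_hat n m i X \<omega> \<partial>M)
           = (a - (LBINT v:{0..}. gamma_survival a v ^ m)) / (real m * a)"
proof -
  define K where "K = (LBINT v:{0..}. gamma_survival a v ^ m)"
  define SS where "SS = {S. S \<subseteq> {1..n} \<and> card S = m}"
  have "has_bochner_integral M (\<lambda>\<omega>. (X (sorted_list_of_set S ! (i - 1)) \<omega>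
          - Min ((\<lambda>j. X j \<omega>) ` S)) / sample_sum \<omega>) ((a - K) / (real n * a))"
    if "S \<in> SS" for S
  proof -
    have "finite S" "card S = m"
      using that finite_subset[of S "{1..n}"] by (auto simp: SS_def)
    then have "sorted_list_of_set S ! (i - 1) \<in> set (sorted_list_of_set S)"
      using assms(1,2) by (intro nth_mem) simp
    then have "sorted_list_of_set S ! (i - 1) \<in> S"
      using \<open>finite S\<close> by simp
    then show ?thesis
      using has_bochner_integral_X_minus_Min(2)[of S] that by (simp add: SS_def K_def)
  qed
  then have "has_bochner_integral M (IG_hat n m i X)
      (fact (m - 1) / (\<Prod>k=1..m-1. real (n - k)) * (\<Sum>S\<in>SS. (a - K) / (real n * a)))"
    unfolding IG_hat_def SS_def[symmetric] sum_divide_distrib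
    by (intro has_bochner_integral_mult_right has_bochner_integral_sum)
  then have "(\<integral>\<omega>. IG_hat n m i X \<omega> \<partial>M)
      = fact (m - 1) / (\<Prod>k=1..m-1. real (n - k)) * real (n choose m) * ((a - K) / (real n * a))"
    by (simp add: has_bochner_integral_integral_eq SS_def n_subsets)
  also have "\<dots> = (a - K) / (real m * a)"
    using assms unfolding fact_div_prod_mult_binomial[OF order_trans[OF assms(1,2)] assms(3)]
    by simp
  finally show ?thesis
    unfolding K_def .
qed

end

theorem corollary3p6:
  fixes M :: "'a measure" and X :: "nat \<Rightarrow> 'a \<Rightarrow> real"
    and n m i :: nat and a l :: real
  assumes "prob_space M"
    and "a > 0" and "l > 0"
    and "2 \<le> m" and "m \<le> n"
    and "prob_space.indep_vars M (\<lambda>_. borel) X {1..n}"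
    and "\<And>k. k \<in> {1..n} \<Longrightarrow> distributed M lborel (X k) (\<lambda>x. ennreal (gamma_density a l x))"
    and "1 \<le> i" and "i \<le> m"
  shows "(\<integral>\<omega>. IG_hat n m i X \<omega> \<partial>M)
           = 1 / real m * (1 - 1 / a *
               (LBINT v:{0..}. (1 - lower_inc_gamma a v / Gamma a) ^ m))
       \<and> 1 / real m * (1 - 1 / a *
               (LBINT v:{0..}. (1 - lower_inc_gamma a v / Gamma a) ^ m))
           = IG_min M m X"
proof -
  interpret gamma_sample M X n a l
    using assms by (simp add: gamma_sample_def gamma_sample_axioms_def)
  have "1 / real m * (1 - 1 / a * (LBINT v:{0..}. (1 - lower_inc_gamma a v / Gamma a) ^ m))
      = (a - (LBINT v:{0..}. gamma_survival a v ^ m)) / (real m * a)"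
    using assms(2,4) unfolding gamma_survival_def by (simp add: field_simps)
  moreover note integral_IG_hat[OF assms(8,9,5)] integral_IG_min[of m]
  ultimately show ?thesis
    using assms(4,5) by simp
qed

end
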